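(* Let $\{G_i\}$ be a family of connected graphs with common induced subgraph $J$, embedded as $J_i\subseteq G_i$, and let $H=\amalg\{(G_i|J_i)\}$. Then every $G_i$ is isometrically embedded in $H$ if and only if the family $\{(G_i|J_i)\}$ is isometric.
   Context: $d_G$ is shortest-path distance in $G$. $J$ is a common induced subgraph of each $G_i$ via injective maps $\iota_i:V(J)\to V(G_i)$ with $\iota_i(x)\iota_i(y)\in E(G_i)$ iff $xy\in E(J)$; $J_i$ is the induced image and $x^i=\iota_i(x)$. $H=\amalg\{(G_i|J_i)\}$ is obtained from the disjoint union of the $G_i$ by identifying, for each $x\in V(J)$, all $x^i$ into one vertex; each $G_i$ is regarded as a subgraph of $H$. A subgraph $G$ of a graph $H$ is isometrically embedded in $H$ if $d_G(u,v)=d_H(u,v)$ for all $u,v\in V(G)$. The family $\{(G_i|J_i)\}$ is isometric if $d_{G_i}(a^i,b^i)=d_{G_j}(a^j,b^j)$ for all $i,j$ and all $a,b\in V(J)$. *)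

theory Defs
  imports Main "HOL-Library.Extended_Nat"
begin

record 'v sgraph =
  verts :: "'v set"
  edges :: "'v set set"

definition wf_graph :: "'v sgraph \<Rightarrow> bool" where
  "wf_graph G \<longleftrightarrow> (\<forall>e\<in>edges G. \<exists>u v. e = {u, v} \<and> u \<noteq> v \<and> u \<in> verts G \<and> v \<in> verts G)"

definition adj :: "'v sgraph \<Rightarrow> 'v \<Rightarrow> 'v \<Rightarrow> bool" where
  "adj G u v \<longleftrightarrow> {u, v} \<in> edges G"

definition walk :: "'v sgraph \<Rightarrow> 'v list \<Rightarrow> bool" where
  "walk G xs \<longleftrightarrow> xs \<noteq> [] \<and> set xs \<subseteq> verts G \<and>
     (\<forall>k. Suc k < length xs \<longrightarrow> adj G (xs ! k) (xs ! Suc k))"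

text \<open>Shortest-path distance (infinite if no walk exists).\<close>
definition gdist :: "'v sgraph \<Rightarrow> 'v \<Rightarrow> 'v \<Rightarrow> enat" where
  "gdist G u v = (INF xs \<in> {xs. walk G xs \<and> hd xs = u \<and> last xs = v}. enat (length xs - 1))"

definition connected_graph :: "'v sgraph \<Rightarrow> bool" where
  "connected_graph G \<longleftrightarrow> verts G \<noteq> {} \<and>
     (\<forall>u\<in>verts G. \<forall>v\<in>verts G. \<exists>xs. walk G xs \<and> hd xs = u \<and> last xs = v)"

definition induced_embedding :: "'w sgraph \<Rightarrow> 'v sgraph \<Rightarrow> ('w \<Rightarrow> 'v) \<Rightarrow> bool" where
  "induced_embedding J G \<iota> \<longleftrightarrow> inj_on \<iota> (verts J) \<and> \<iota> ` verts J \<subseteq> verts G \<and>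
     (\<forall>x\<in>verts J. \<forall>y\<in>verts J. adj G (\<iota> x) (\<iota> y) \<longleftrightarrow> adj J x y)"

text \<open>Amalgamation: vertices of H are the classes of the disjoint union
  \<open>{(i,v). i \<in> I, v \<in> V(G i)}\<close> under the identification of all copies
  \<open>(i, \<iota> i x)\<close> of a vertex \<open>x\<close> of \<open>J\<close>. \<open>amal_cls\<close> is the class of \<open>(i,v)\<close>.\<close>
definition amal_cls :: "'i set \<Rightarrow> ('i \<Rightarrow> 'v sgraph) \<Rightarrow> 'w sgraph \<Rightarrow> ('i \<Rightarrow> 'w \<Rightarrow> 'v)
    \<Rightarrow> 'i \<Rightarrow> 'v \<Rightarrow> ('i \<times> 'v) set" where
  "amal_cls I G J \<iota> i v = {(j, w). j \<in> I \<and> w \<in> verts (G j) \<and>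
      ((j, w) = (i, v) \<or> (\<exists>x\<in>verts J. v = \<iota> i x \<and> w = \<iota> j x))}"

definition amalgam :: "'i set \<Rightarrow> ('i \<Rightarrow> 'v sgraph) \<Rightarrow> 'w sgraph \<Rightarrow> ('i \<Rightarrow> 'w \<Rightarrow> 'v)
    \<Rightarrow> ('i \<times> 'v) set sgraph" where
  "amalgam I G J \<iota> =
     \<lparr> verts = {amal_cls I G J \<iota> i v | i v. i \<in> I \<and> v \<in> verts (G i)},
       edges = {{amal_cls I G J \<iota> i u, amal_cls I G J \<iota> i v} | i u v. i \<in> I \<and> {u, v} \<in> edges (G i)} \<rparr>"

definition isometric_in_amalgam :: "'i set \<Rightarrow> ('i \<Rightarrow> 'v sgraph) \<Rightarrow> 'w sgraph \<Rightarrow> ('i \<Rightarrow> 'w \<Rightarrow> 'v)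
    \<Rightarrow> 'i \<Rightarrow> bool" where
  "isometric_in_amalgam I G J \<iota> i \<longleftrightarrow>
     (\<forall>u\<in>verts (G i). \<forall>v\<in>verts (G i).
        gdist (G i) u v = gdist (amalgam I G J \<iota>) (amal_cls I G J \<iota> i u) (amal_cls I G J \<iota> i v))"

definition isometric_family :: "'i set \<Rightarrow> ('i \<Rightarrow> 'v sgraph) \<Rightarrow> 'w sgraph \<Rightarrow> ('i \<Rightarrow> 'w \<Rightarrow> 'v) \<Rightarrow> bool" where
  "isometric_family I G J \<iota> \<longleftrightarrow>
     (\<forall>i\<in>I. \<forall>j\<in>I. \<forall>a\<in>verts J. \<forall>b\<in>verts J.
        gdist (G i) (\<iota> i a) (\<iota> i b) = gdist (G j) (\<iota> j a) (\<iota> j b))"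

end

theory Submission
  imports Defs
begin

text \<open>Mapping each \<open>G i\<close> into the amalgam \<open>H\<close> cannot increase distances, and the glued
  copies of a vertex of \<open>J\<close> become one vertex of \<open>H\<close>; so isometric embeddings force the
  family to be isometric. Conversely, fix \<open>v\<close> in \<open>G i\<close> and consider on each \<open>G j\<close> the
  distance to \<open>v\<close> ``through \<open>J\<close>'', i.e. \<open>min\<^sub>a d\<^sub>j(w, a\<^sup>j) + d\<^sub>i(a\<^sup>i, v)\<close>, and plain
  \<open>d\<^sub>i(w, v)\<close> on \<open>G i\<close> itself. Each of these functions is 1-Lipschitz, and when the
  family is isometric they agree on the glued vertices, so they descend to a 1-Lipschitz
  function on \<open>H\<close>; along any walk of \<open>H\<close> from \<open>u\<close> to \<open>v\<close> it drops from \<open>d\<^sub>i(u, v)\<close> to 0,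
  which bounds the length of the walk from below.\<close>

lemma Inf_enat_in: "A \<noteq> {} \<Longrightarrow> Inf A \<in> (A :: enat set)"
  unfolding Inf_enat_def by (auto intro: LeastI)

lemma INF_le_INF_add_enat:
  assumes "\<And>a. a \<in> A \<Longrightarrow> f a \<le> g a + c"
  shows "(INF a\<in>A. f a) \<le> (INF a\<in>A. g a) + (c :: enat)"
proof (cases "A = {}")
  case True
  then show ?thesis by (simp add: top_enat_def)
next
  case False
  then obtain a where a: "a \<in> A" "(INF a\<in>A. g a) = g a"
    using Inf_enat_in[of "g ` A"] by auto
  have "(INF a\<in>A. f a) \<le> f a" using a(1) by (rule INF_lower)
  also have "\<dots> \<le> g a + c" using a(1) assms by blast
  finally show ?thesis using a(2) by simp
qed

lemma walk_Cons_Cons [simp]: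
  "walk G (x # y # xs) \<longleftrightarrow> x \<in> verts G \<and> adj G x y \<and> walk G (y # xs)"
  unfolding walk_def by (auto simp: less_Suc_eq_0_disj)

lemma walk_singleton [simp]: "walk G [x] \<longleftrightarrow> x \<in> verts G"
  by (simp add: walk_def)

lemma gdist_le_walk_length:
  "walk G xs \<Longrightarrow> gdist G (hd xs) (last xs) \<le> enat (length xs - 1)"
  unfolding gdist_def by (rule INF_lower) auto

lemma gdist_shortest_walk:
  assumes "gdist G u v \<noteq> \<infinity>"
  obtains xs where "walk G xs" "hd xs = u" "last xs = v" "gdist G u v = enat (length xs - 1)"
proof -
  let ?W = "{xs. walk G xs \<and> hd xs = u \<and> last xs = v}"
  have "?W \<noteq> {}"
  proof
    assume "?W = {}"
    then have "gdist G u v = \<infinity>" unfolding gdist_def \<open>?W = {}\<close> by (simp add: top_enat_def)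
    with assms show False ..
  qed
  then have "gdist G u v \<in> (\<lambda>xs. enat (length xs - 1)) ` ?W"
    unfolding gdist_def by (intro Inf_enat_in) simp
  then show ?thesis using that by blast
qed

lemma gdist_refl: "u \<in> verts G \<Longrightarrow> gdist G u u = 0"
  using gdist_le_walk_length[of G "[u]"] by (simp add: zero_enat_def[symmetric])

lemma adj_sym: "adj G x y \<Longrightarrow> adj G y x"
  unfolding adj_def by (simp add: insert_commute)

lemma adj_verts: "wf_graph G \<Longrightarrow> adj G x y \<Longrightarrow> x \<in> verts G \<and> y \<in> verts G"
  unfolding wf_graph_def adj_def by (fastforce simp: doubleton_eq_iff)

lemma gdist_adj_le:
  assumes "x \<in> verts G" "adj G x y"
  shows "gdist G x z \<le> gdist G y z + 1"
proof (cases "gdist G y z = \<infinity>")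
  case False
  then obtain ys where ys: "walk G ys" "hd ys = y" "last ys = z" "gdist G y z = enat (length ys - 1)"
    by (rule gdist_shortest_walk)
  then obtain zs where "ys = y # zs" by (cases ys) (auto simp: walk_def)
  then have "gdist G x z \<le> enat (length (x # ys) - 1)"
    using gdist_le_walk_length[of G "x # ys"] assms ys by auto
  then show ?thesis using ys \<open>ys = y # zs\<close> by (simp add: one_enat_def)
qed simp

lemma walk_lipschitz:
  assumes "\<And>c c'. c \<in> verts H \<Longrightarrow> adj H c c' \<Longrightarrow> \<phi> c \<le> \<phi> c' + 1"
  shows "walk H xs \<Longrightarrow> \<phi> (hd xs) \<le> \<phi> (last xs) + enat (length xs - 1)"
proof (induction xs rule: induct_list012)
  case (3 x y zs)
  then have "\<phi> x \<le> \<phi> y + 1" "\<phi> y \<le> \<phi> (last (y # zs)) + enat (length zs)"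
    using assms by auto
  then have "\<phi> x \<le> \<phi> (last (y # zs)) + enat (length zs) + 1"
    by (meson add_right_mono order_trans)
  then show ?case by (simp add: eSuc_enat[symmetric] eSuc_plus_1 add.assoc)
qed (auto simp: walk_def)

lemma lipschitz_le_gdist:
  assumes "\<And>c c'. c \<in> verts H \<Longrightarrow> adj H c c' \<Longrightarrow> \<phi> c \<le> \<phi> c' + 1"
  shows "\<phi> u \<le> \<phi> v + gdist H u v"
proof (cases "gdist H u v = \<infinity>")
  case False
  then obtain xs where "walk H xs" "hd xs = u" "last xs = v" "gdist H u v = enat (length xs - 1)"
    by (rule gdist_shortest_walk)
  then show ?thesis using walk_lipschitz[of H \<phi>, OF assms] by metis
qed simp

lemma gdist_triangle: "gdist G u w \<le> gdist G u v + gdist G v w"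
proof -
  have "gdist G c w \<le> gdist G c' w + 1" if "c \<in> verts G" "adj G c c'" for c c'
    using that by (rule gdist_adj_le)
  from lipschitz_le_gdist[of G "\<lambda>x. gdist G x w", OF this] show ?thesis
    by (simp add: add.commute)
qed

lemma gdist_hom_le:
  assumes "f ` verts G \<subseteq> verts H" "\<And>x y. adj G x y \<Longrightarrow> adj H (f x) (f y)"
  shows "gdist H (f u) (f v) \<le> gdist G u v"
  unfolding gdist_def[of G]
proof (rule INF_greatest)
  fix xs assume "xs \<in> {xs. walk G xs \<and> hd xs = u \<and> last xs = v}"
  then have xs: "walk G xs" "hd xs = u" "last xs = v" by auto
  then have "walk H (map f xs)"
    using assms unfolding walk_def by (auto simp: image_subset_iff subset_iff)
  moreover have "xs \<noteq> []" using xs by (simp add: walk_def)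
  ultimately show "gdist H (f u) (f v) \<le> enat (length xs - 1)"
    using gdist_le_walk_length[of H "map f xs"] xs by (simp add: hd_map last_map)
qed

lemma INF_gdist_through:
  assumes "x \<in> S" "x \<in> verts G"
  shows "(INF y\<in>S. gdist G x y + gdist G y v) = gdist G x v"
proof (rule antisym)
  show "(INF y\<in>S. gdist G x y + gdist G y v) \<le> gdist G x v"
    using assms by (intro INF_lower2[of x]) (simp_all add: gdist_refl)
  show "gdist G x v \<le> (INF y\<in>S. gdist G x y + gdist G y v)"
    by (intro INF_greatest gdist_triangle)
qed

lemma amal_cls_in_amalgam:
  "i \<in> I \<Longrightarrow> v \<in> verts (G i) \<Longrightarrow> amal_cls I G J \<iota> i v \<in> verts (amalgam I G J \<iota>)"
  unfolding amalgam_def by auto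

lemma induced_embedding_in_verts:
  "induced_embedding J G f \<Longrightarrow> a \<in> verts J \<Longrightarrow> f a \<in> verts G"
  unfolding induced_embedding_def by auto

lemma amal_cls_glued_vertex:
  assumes "\<And>k. k \<in> I \<Longrightarrow> induced_embedding J (G k) (\<iota> k)" "i \<in> I" "a \<in> verts J"
  shows "amal_cls I G J \<iota> i (\<iota> i a) = {(k, \<iota> k a) | k. k \<in> I}"
proof -
  have "x = a" if "x \<in> verts J" "\<iota> i a = \<iota> i x" for x
    using assms that unfolding induced_embedding_def by (metis inj_onD)
  then show ?thesis
    unfolding amal_cls_def using assms induced_embedding_in_verts by fastforce
qed

lemma adj_amalgamE:
  assumes "adj (amalgam I G J \<iota>) c c'"
  obtains j x y where "j \<in> I" "adj (G j) x y"
    "c = amal_cls I G J \<iota> j x" "c' = amal_cls I G J \<iota> j y"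
proof -
  obtain j x y where j: "j \<in> I" "adj (G j) x y"
    and "{c, c'} = {amal_cls I G J \<iota> j x, amal_cls I G J \<iota> j y}"
    using assms unfolding adj_def amalgam_def by auto
  then consider "c = amal_cls I G J \<iota> j x" "c' = amal_cls I G J \<iota> j y"
    | "c = amal_cls I G J \<iota> j y" "c' = amal_cls I G J \<iota> j x"
    by (auto simp: doubleton_eq_iff)
  then show ?thesis
    using that j adj_sym[OF j(2)] by cases blast+
qed

lemma gdist_amalgam_le:
  assumes "i \<in> I"
  shows "gdist (amalgam I G J \<iota>) (amal_cls I G J \<iota> i u) (amal_cls I G J \<iota> i v) \<le> gdist (G i) u v"
proof (rule gdist_hom_le)
  show "amal_cls I G J \<iota> i ` verts (G i) \<subseteq> verts (amalgam I G J \<iota>)"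
    by (rule image_subsetI) (rule amal_cls_in_amalgam[OF assms])
  show "adj (amalgam I G J \<iota>) (amal_cls I G J \<iota> i x) (amal_cls I G J \<iota> i y)"
    if "adj (G i) x y" for x y
    using assms that unfolding adj_def amalgam_def by (simp, blast)
qed

lemma amalgam_potential_le_gdist:
  assumes wf: "\<And>j. j \<in> I \<Longrightarrow> wf_graph (G j)"
    and glued: "\<And>j k x. j \<in> I \<Longrightarrow> k \<in> I \<Longrightarrow> x \<in> verts J \<Longrightarrow> \<psi> j (\<iota> j x) = \<psi> k (\<iota> k x)"
    and lipschitz: "\<And>j x y. j \<in> I \<Longrightarrow> adj (G j) x y \<Longrightarrow> \<psi> j x \<le> \<psi> j y + 1"
    and i: "i \<in> I" "u \<in> verts (G i)" "v \<in> verts (G i)"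
  shows "\<psi> i u \<le> \<psi> i v + gdist (amalgam I G J \<iota>) (amal_cls I G J \<iota> i u) (amal_cls I G J \<iota> i v)"
proof -
  \<comment> \<open>\<open>\<psi>\<close> is constant on every class, so the infimum just reads off its value there.\<close>
  define \<phi> where "\<phi> c = (INF (j, w)\<in>c. \<psi> j w)" for c
  have \<phi>_cls: "\<phi> (amal_cls I G J \<iota> j w) = \<psi> j w" if "j \<in> I" "w \<in> verts (G j)" for j w
    unfolding \<phi>_def by (rule INF_eq_const) (use that glued in \<open>auto simp: amal_cls_def\<close>)
  have "\<phi> c \<le> \<phi> c' + 1" if adj: "adj (amalgam I G J \<iota>) c c'" for c c'
  proof -
    obtain j x y where j: "j \<in> I" "adj (G j) x y"
      and c: "c = amal_cls I G J \<iota> j x" "c' = amal_cls I G J \<iota> j y"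
      using adj by (rule adj_amalgamE)
    have "x \<in> verts (G j)" "y \<in> verts (G j)"
      using adj_verts[OF wf j(2)] j(1) by auto
    then show ?thesis
      using c \<phi>_cls lipschitz j by simp
  qed
  then have "\<phi> (amal_cls I G J \<iota> i u) \<le> \<phi> (amal_cls I G J \<iota> i v)
      + gdist (amalgam I G J \<iota>) (amal_cls I G J \<iota> i u) (amal_cls I G J \<iota> i v)"
    by (intro lipschitz_le_gdist)
  then show ?thesis
    using \<phi>_cls i by simp
qed

lemma gdist_le_gdist_amalgam:
  assumes wf: "\<And>j. j \<in> I \<Longrightarrow> wf_graph (G j)"
    and emb: "\<And>j. j \<in> I \<Longrightarrow> induced_embedding J (G j) (\<iota> j)"
    and iso: "isometric_family I G J \<iota>"
    and i: "i \<in> I" "u \<in> verts (G i)" "v \<in> verts (G i)"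
  shows "gdist (G i) u v \<le> gdist (amalgam I G J \<iota>) (amal_cls I G J \<iota> i u) (amal_cls I G J \<iota> i v)"
proof -
  define \<psi> where "\<psi> j w = (if j = i then gdist (G i) w v
      else (INF a\<in>verts J. gdist (G j) w (\<iota> j a) + gdist (G i) (\<iota> i a) v))" for j w
  have \<psi>_glued: "\<psi> j (\<iota> j a) = gdist (G i) (\<iota> i a) v" if j: "j \<in> I" and a: "a \<in> verts J" for j a
  proof -
    have "gdist (G j) (\<iota> j a) (\<iota> j b) = gdist (G i) (\<iota> i a) (\<iota> i b)" if "b \<in> verts J" for b
      using iso i(1) j a that unfolding isometric_family_def by metis
    then have "(INF b\<in>verts J. gdist (G j) (\<iota> j a) (\<iota> j b) + gdist (G i) (\<iota> i b) v)
        = (INF y\<in>\<iota> i ` verts J. gdist (G i) (\<iota> i a) y + gdist (G i) y v)"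
      by (simp add: image_image)
    also have "\<dots> = gdist (G i) (\<iota> i a) v"
      using a induced_embedding_in_verts[OF emb[OF i(1)] a] by (intro INF_gdist_through) auto
    finally show ?thesis by (simp add: \<psi>_def)
  qed
  have \<psi>_lipschitz: "\<psi> j x \<le> \<psi> j y + 1" if "j \<in> I" "adj (G j) x y" for j x y
  proof -
    have x: "x \<in> verts (G j)" using adj_verts[OF wf[OF that(1)] that(2)] by auto
    have step: "gdist (G j) x z \<le> gdist (G j) y z + 1" for z
      using x that(2) by (rule gdist_adj_le)
    then have "gdist (G j) x z + d \<le> (gdist (G j) y z + d) + 1" for z d
      by (metis add.commute add.left_commute add_right_mono)
    then show ?thesis
      using step by (auto simp: \<psi>_def intro: INF_le_INF_add_enat)
  qed
  have "\<psi> i u \<le> \<psi> i v + gdist (amalgam I G J \<iota>) (amal_cls I G J \<iota> i u) (amal_cls I G J \<iota> i v)"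
    using wf \<psi>_glued \<psi>_lipschitz i by (intro amalgam_potential_le_gdist) auto
  then show ?thesis
    using i by (simp add: \<psi>_def gdist_refl)
qed

theorem lemma2:
  fixes I :: "'i set" and G :: "'i \<Rightarrow> 'v sgraph" and J :: "'w sgraph" and \<iota> :: "'i \<Rightarrow> 'w \<Rightarrow> 'v"
  assumes "wf_graph J"
    and "\<And>i. i \<in> I \<Longrightarrow> wf_graph (G i)"
    and "\<And>i. i \<in> I \<Longrightarrow> connected_graph (G i)"
    and "\<And>i. i \<in> I \<Longrightarrow> induced_embedding J (G i) (\<iota> i)"
  shows "(\<forall>i\<in>I. isometric_in_amalgam I G J \<iota> i) \<longleftrightarrow> isometric_family I G J \<iota>"
proof
  assume embedded: "\<forall>i\<in>I. isometric_in_amalgam I G J \<iota> i"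
  have "gdist (G i) (\<iota> i a) (\<iota> i b) = gdist (amalgam I G J \<iota>)
      {(k, \<iota> k a) | k. k \<in> I} {(k, \<iota> k b) | k. k \<in> I}"
    if "i \<in> I" "a \<in> verts J" "b \<in> verts J" for i a b
  proof -
    have "gdist (G i) (\<iota> i a) (\<iota> i b) = gdist (amalgam I G J \<iota>)
        (amal_cls I G J \<iota> i (\<iota> i a)) (amal_cls I G J \<iota> i (\<iota> i b))"
      using embedded that induced_embedding_in_verts[OF assms(4)]
      unfolding isometric_in_amalgam_def by blast
    then show ?thesis
      using that amal_cls_glued_vertex[where I=I and G=G and J=J and \<iota>=\<iota>, OF assms(4)] by simp
  qed
  then show "isometric_family I G J \<iota>"
    unfolding isometric_family_def by simp
next
  assume "isometric_family I G J \<iota>"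
  then show "\<forall>i\<in>I. isometric_in_amalgam I G J \<iota> i"
    unfolding isometric_in_amalgam_def
    by (intro ballI antisym gdist_le_gdist_amalgam[OF assms(2,4)] gdist_amalgam_le)
qed
end
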